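(* Let $X,Y\subseteq\Sigma^*$ be infinite languages and $F\subseteq\Sigma^*$ a finite language. Then $D(X,Y)=D(X\cup F,Y)$ for every $D\in\{\mathrm{AH}_{\mathrm{ned}},\mathrm{AH}_{\mathrm{ged}},\mathrm{AH}_{\mathrm{ced}}\}$.
   Context: $\Sigma$ is a finite alphabet. An edit path from $x$ to $y$ is a sequence $p=(a_1,b_1)\cdots(a_n,b_n)$ with $(a_i,b_i)\in(\Sigma\cup\{\varepsilon\})^2\setminus\{(\varepsilon,\varepsilon)\}$, $a_1\cdots a_n=x$, $b_1\cdots b_n=y$; $|p|=n$, $\mathrm{wgt}(p)=|\{i:a_i\ne b_i\}|$. $\mathrm{ed}(x,y)=\min_p\mathrm{wgt}(p)$; $\mathrm{ned}(x,y)=\min_p\mathrm{wgt}(p)/|p|$ ($\mathrm{ned}(\varepsilon,\varepsilon)=0$); $\mathrm{ged}(x,y)=\frac{2\mathrm{ed}(x,y)}{|x|+|y|+\mathrm{ed}(x,y)}$ ($0$ if $x=y=\varepsilon$); $\mathrm{ced}(x,y)$ is the minimum, over sequences $x=u_0,\dots,u_k=y$ with $\mathrm{ed}(u_{i-1},u_i)=1$, of $\sum_{i=1}^k1/\max(|u_{i-1}|,|u_i|)$. For a word distance $d$ and languages $X,Y$: $\overrightarrow{\mathrm{AH}}_{d}(X,Y)=\lim_{k\to\infty}\sup_{x\in X,|x|\ge k}\inf_{y\in Y}d(x,y)$ and $\mathrm{AH}_d(X,Y)=\max\{\overrightarrow{\mathrm{AH}}_{d}(X,Y),\overrightarrow{\mathrm{AH}}_{d}(Y,X)\}$.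 *)

theory Defs
  imports "HOL-Analysis.Analysis" "HOL-Library.Extended_Real"
begin

text \<open>Words over the finite alphabet 'a are lists; \<open>None\<close> plays the role of the empty word.\<close>

definition opt_word :: "'a option \<Rightarrow> 'a list" where
  "opt_word a = (case a of None \<Rightarrow> [] | Some c \<Rightarrow> [c])"

definition edit_path :: "('a option \<times> 'a option) list \<Rightarrow> 'a list \<Rightarrow> 'a list \<Rightarrow> bool" where
  "edit_path p x y \<longleftrightarrow>
     (\<forall>e\<in>set p. e \<noteq> (None, None)) \<and>
     concat (map (\<lambda>e. opt_word (fst e)) p) = x \<and>
     concat (map (\<lambda>e. opt_word (snd e)) p) = y"

definition wgt :: "('a option \<times> 'a option) list \<Rightarrow> nat" where
  "wgt p = length (filter (\<lambda>e. fst e \<noteq> snd e) p)"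

definition ed :: "'a list \<Rightarrow> 'a list \<Rightarrow> nat" where
  "ed x y = (INF p \<in> {p. edit_path p x y}. wgt p)"

definition ned :: "'a list \<Rightarrow> 'a list \<Rightarrow> real" where
  "ned x y = (if x = [] \<and> y = [] then 0
     else (INF p \<in> {p. edit_path p x y}. real (wgt p) / real (length p)))"

definition ged :: "'a list \<Rightarrow> 'a list \<Rightarrow> real" where
  "ged x y = (if x = [] \<and> y = [] then 0
     else 2 * real (ed x y) / (real (length x) + real (length y) + real (ed x y)))"

definition ced_chain :: "'a list \<Rightarrow> 'a list \<Rightarrow> 'a list list \<Rightarrow> bool" where
  "ced_chain x y us \<longleftrightarrow> us \<noteq> [] \<and> hd us = x \<and> last us = y \<and>
     (\<forall>i < length us - 1. ed (us ! i) (us ! Suc i) = 1)"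

definition ced :: "'a list \<Rightarrow> 'a list \<Rightarrow> real" where
  "ced x y = (INF us \<in> {us. ced_chain x y us}.
     (\<Sum>i < length us - 1. 1 / real (max (length (us ! i)) (length (us ! Suc i)))))"

definition AH_dir :: "('a list \<Rightarrow> 'a list \<Rightarrow> real) \<Rightarrow> 'a list set \<Rightarrow> 'a list set \<Rightarrow> ereal" where
  "AH_dir d X Y = lim (\<lambda>k::nat. SUP x \<in> {x \<in> X. length x \<ge> k}. INF y \<in> Y. ereal (d x y))"

definition AH :: "('a list \<Rightarrow> 'a list \<Rightarrow> real) \<Rightarrow> 'a list set \<Rightarrow> 'a list set \<Rightarrow> ereal" where
  "AH d X Y = max (AH_dir d X Y) (AH_dir d Y X)"

end

theory Submission
  imports Defs
begin

text \<open>From \<open>X \<union> F\<close> to \<open>Y\<close>,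
  the words of \<open>F\<close> eventually fall below the length threshold and leave the supremum. From \<open>Y\<close>
  to \<open>X \<union> F\<close>, the distance from a long word \<open>y\<close> to the boundedly short words of \<open>F\<close>
  approaches the largest value the distance can take at all: \<open>ned y f\<close> and \<open>ged y f\<close> are at
  least \<open>1 - |f| / |y|\<close> and at most 1, while \<open>ced y f \<ge> H(|y|) - H(|f|)\<close> for the harmonic
  numbers \<open>H\<close> (each unit edit of a chain changes the length by at most one), which diverges. So
  \<open>F\<close> never brings a long \<open>y\<close> closer to \<open>X \<union> F\<close> than it already is to \<open>X\<close>.\<close>

lemma edit_path_swap: "edit_path p x y \<Longrightarrow> edit_path (map prod.swap p) y x"
  by (auto simp: edit_path_def o_def)

lemma wgt_swap [simp]: "wgt (map prod.swap p) = wgt p"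
  by (induction p) (auto simp: wgt_def)

lemma edit_path_length_snd:
  assumes "edit_path p x y"
  shows "length y \<le> length p" "length p \<le> wgt p + length y"
proof -
  have "length (concat (map (\<lambda>e. opt_word (snd e)) p)) \<le> length p \<and>
        length p \<le> wgt p + length (concat (map (\<lambda>e. opt_word (snd e)) p))"
    if "\<forall>e\<in>set p. e \<noteq> (None, None)" for p :: "('a option \<times> 'a option) list"
    using that by (induction p) (auto simp: wgt_def opt_word_def split: option.split)
  then show "length y \<le> length p" "length p \<le> wgt p + length y"
    using assms by (auto simp: edit_path_def)
qed

lemma edit_path_length_fst:
  assumes "edit_path p x y"
  shows "length x \<le> length p" "length p \<le> wgt p + length x"
  using edit_path_length_snd[OF edit_path_swap[OF assms]] by simp_all

definition delete_insert_path :: "'a list \<Rightarrow> 'a list \<Rightarrow> ('a option \<times> 'a option) list" where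
  "delete_insert_path x y = map (\<lambda>c. (Some c, None)) x @ map (\<lambda>c. (None, Some c)) y"

lemma concat_opt_word_Some [simp]: "concat (map (\<lambda>c. opt_word (Some c)) x) = x"
  by (induction x) (auto simp: opt_word_def)

lemma delete_insert_path:
  "edit_path (delete_insert_path x y) x y"
  "wgt (delete_insert_path x y) = length x + length y"
  "length (delete_insert_path x y) = length x + length y"
  by (auto simp: delete_insert_path_def edit_path_def wgt_def opt_word_def o_def)

lemma ed_le_wgt: "edit_path p x y \<Longrightarrow> ed x y \<le> wgt p"
  unfolding ed_def by (rule cINF_lower) auto

lemma ed_attained: "\<exists>p. edit_path p x y \<and> wgt p = ed x y"
proof -
  have "ed x y \<in> wgt ` {p. edit_path p x y}"
    unfolding ed_def using delete_insert_path(1) by (intro Inf_nat_def1) auto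
  then show ?thesis by auto
qed

lemma ed_le_length_add: "ed x y \<le> length x + length y"
  using ed_le_wgt[OF delete_insert_path(1)] by (simp add: delete_insert_path(2))

lemma length_le_ed_add:
  "length x \<le> ed x y + length y" "length y \<le> ed x y + length x"
proof -
  obtain p where "edit_path p x y" "wgt p = ed x y"
    using ed_attained by blast
  then show "length x \<le> ed x y + length y" "length y \<le> ed x y + length x"
    using edit_path_length_fst edit_path_length_snd by fastforce+
qed

lemma ed_Cons_left [simp]: "ed (c # w) w = 1"
proof -
  let ?p = "(Some c, None) # map (\<lambda>a. (Some a, Some a)) w"
  have "edit_path ?p (c # w) w" "wgt ?p = 1"
    by (auto simp: edit_path_def opt_word_def wgt_def o_def)
  then have "ed (c # w) w \<le> 1"
    by (metis ed_le_wgt)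
  then show ?thesis
    using length_le_ed_add(1)[of "c # w" w] by simp
qed

lemma ed_Cons_right [simp]: "ed w (c # w) = 1"
proof -
  let ?p = "(None, Some c) # map (\<lambda>a. (Some a, Some a)) w"
  have "edit_path ?p w (c # w)" "wgt ?p = 1"
    by (auto simp: edit_path_def opt_word_def wgt_def o_def)
  then have "ed w (c # w) \<le> 1"
    by (metis ed_le_wgt)
  then show ?thesis
    using length_le_ed_add(2)[where x = w and y = "c # w"] by simp
qed

lemma ned_le_1: "ned x y \<le> 1"
proof (cases "x = [] \<and> y = []")
  case False
  then have "ned x y \<le> real (wgt (delete_insert_path x y)) / real (length (delete_insert_path x y))"
    unfolding ned_def using delete_insert_path(1)
    by (auto intro!: cINF_lower bdd_belowI[where m = 0])
  also have "\<dots> = 1"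
    using False by (simp add: delete_insert_path flip: of_nat_add)
  finally show ?thesis .
qed (simp add: ned_def)

lemma ned_ge_1_minus_length_ratio:
  assumes "y \<noteq> []"
  shows "1 - real (length f) / real (length y) \<le> ned y f"
proof -
  have "1 - real (length f) / real (length y) \<le> real (wgt p) / real (length p)"
    if p: "edit_path p y f" for p
  proof -
    have "0 < length y" "length y \<le> length p" "length p \<le> wgt p + length f"
      using assms edit_path_length_fst[OF p] edit_path_length_snd[OF p] by auto
    then have "0 < length p"
      by linarith
    then have "1 - real (wgt p) / real (length p) = (real (length p) - real (wgt p)) / real (length p)"
      by (simp add: diff_divide_distrib)
    also have "\<dots> \<le> real (length f) / real (length p)"
      using \<open>length p \<le> wgt p + length f\<close> by (intro divide_right_mono) auto
    also have "\<dots> \<le> real (length f) / real (length y)"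
      using \<open>0 < length y\<close> \<open>0 < length p\<close> \<open>length y \<le> length p\<close>
      by (intro divide_left_mono) simp_all
    finally show ?thesis by simp
  qed
  then show ?thesis
    unfolding ned_def using assms delete_insert_path(1)[of y f] by (auto intro!: cINF_greatest)
qed

lemma ged_le_1: "ged x y \<le> 1"
proof (cases "x = [] \<and> y = []")
  case False
  then have "0 < real (length x) + real (length y)"
    by (simp flip: of_nat_add)
  moreover have "real (ed x y) \<le> real (length x) + real (length y)"
    using ed_le_length_add[of x y] by linarith
  ultimately show ?thesis
    by (simp add: ged_def del: of_nat_add)
qed (simp add: ged_def)

lemma ged_ge_1_minus_length_ratio:
  assumes "y \<noteq> []"
  shows "1 - real (length f) / real (length y) \<le> ged y f"
proof -
  define a b e where "a = real (length y)" and "b = real (length f)" and "e = real (ed y f)"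
  have "a > 0" "b \<ge> 0" "e \<ge> 0" "a - b \<le> e"
    using assms length_le_ed_add(1)[of y f] by (auto simp: a_def b_def e_def)
  have ged: "ged y f = 2 * e / (a + b + e)"
    using assms by (simp add: ged_def a_def b_def e_def)
  show ?thesis
  proof (cases "b \<le> a")
    case True
    have "0 \<le> (a + b) * (e - (a - b))"
      using \<open>a - b \<le> e\<close> \<open>b \<ge> 0\<close> \<open>a > 0\<close> by simp
    then have "1 - b / a \<le> 2 * e / (a + b + e)"
      using \<open>a > 0\<close> \<open>b \<ge> 0\<close> \<open>e \<ge> 0\<close> by (simp add: field_simps)
    then show ?thesis
      by (simp add: ged a_def b_def)
  next
    case False
    then have "1 - b / a \<le> 0"
      using \<open>a > 0\<close> by (simp add: field_simps)
    moreover have "0 \<le> ged y f"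
      using ged \<open>a > 0\<close> \<open>b \<ge> 0\<close> \<open>e \<ge> 0\<close> by simp
    ultimately show ?thesis
      by (simp add: a_def b_def)
  qed
qed

lemma harm_diff_le_inverse_max:
  assumes "m \<le> Suc n" "n \<le> Suc m"
  shows "harm m - harm n \<le> (1 / real (max m n) :: real)"
proof -
  consider "m = Suc n" | "m = n" | "n = Suc m"
    using assms by linarith
  then show ?thesis
    by cases (simp_all add: harm_Suc field_simps)
qed

lemma ced_chain_Cons:
  assumes "ed x y = 1" "ced_chain y z us"
  shows "ced_chain x z (x # us)"
proof -
  have "ed ((x # us) ! i) ((x # us) ! Suc i) = 1" if "i < length us" for i
  proof (cases i)
    case 0
    then show ?thesis using assms by (auto simp: ced_chain_def hd_conv_nth)
  next
    case (Suc j)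
    then show ?thesis using assms that by (auto simp: ced_chain_def)
  qed
  then show ?thesis
    using assms(2) by (auto simp: ced_chain_def)
qed

lemma ced_chain_snoc:
  assumes "ced_chain x y us" "ed y z = 1"
  shows "ced_chain x z (us @ [z])"
proof -
  have "ed ((us @ [z]) ! i) ((us @ [z]) ! Suc i) = 1" if "i < length us" for i
  proof (cases "i < length us - 1")
    case True
    then show ?thesis using assms by (auto simp: ced_chain_def nth_append)
  next
    case False
    then have "i = length us - 1" using that by simp
    then show ?thesis using assms by (auto simp: ced_chain_def nth_append last_conv_nth)
  qed
  then show ?thesis
    using assms(1) by (auto simp: ced_chain_def)
qed

lemma ced_chain_Nil_left: "\<exists>us. ced_chain [] y us"
proof (induction y)
  case Nil
  show ?case by (rule exI[of _ "[[]]"]) (simp add: ced_chain_def)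
next
  case (Cons c y)
  then obtain us where "ced_chain [] y us" ..
  then have "ced_chain [] (c # y) (us @ [c # y])"
    by (rule ced_chain_snoc) simp
  then show ?case ..
qed

lemma ced_chain_exists: "\<exists>us. ced_chain x y us"
proof (induction x)
  case Nil
  show ?case by (rule ced_chain_Nil_left)
next
  case (Cons c x)
  then obtain us where "ced_chain x y us" ..
  then have "ced_chain (c # x) y ((c # x) # us)"
    by (rule ced_chain_Cons[rotated]) simp
  then show ?case ..
qed

lemma harm_diff_le_ced: "harm (length x) - harm (length y) \<le> ced x y"
  unfolding ced_def
proof (rule cINF_greatest)
  show "{us. ced_chain x y us} \<noteq> {}"
    using ced_chain_exists by blast
next
  fix us assume "us \<in> {us. ced_chain x y us}"
  then have us: "us \<noteq> []" "hd us = x" "last us = y"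
    and step: "\<And>i. i < length us - 1 \<Longrightarrow> ed (us ! i) (us ! Suc i) = 1"
    by (auto simp: ced_chain_def)
  let ?h = "\<lambda>i. harm (length (us ! i)) :: real"
  have "harm (length x) - harm (length y) = ?h 0 - ?h (length us - 1)"
    using us by (simp add: hd_conv_nth last_conv_nth)
  also have "\<dots> = (\<Sum>i < length us - 1. ?h i - ?h (Suc i))"
    by (rule sum_lessThan_telescope'[symmetric])
  also have "\<dots> \<le> (\<Sum>i < length us - 1. 1 / real (max (length (us ! i)) (length (us ! Suc i))))"
  proof (intro sum_mono harm_diff_le_inverse_max)
    fix i assume "i \<in> {..<length us - 1}"
    then show "length (us ! i) \<le> Suc (length (us ! Suc i))"
      and "length (us ! Suc i) \<le> Suc (length (us ! i))"
      using length_le_ed_add[where x = "us ! i" and y = "us ! Suc i"] step by auto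
  qed
  finally show "harm (length x) - harm (length y)
      \<le> (\<Sum>i < length us - 1. 1 / real (max (length (us ! i)) (length (us ! Suc i))))" .
qed

lemma finite_imp_length_bounded: "finite F \<Longrightarrow> \<exists>N. \<forall>f\<in>F. length f \<le> N"
  using finite_nat_set_iff_bounded_le[of "length ` F"] by auto

lemma AH_dir_eq_INF:
  "AH_dir d X Y = (INF k. SUP x \<in> {x \<in> X. k \<le> length x}. INF y \<in> Y. ereal (d x y))"
proof -
  have "decseq (\<lambda>k. SUP x \<in> {x \<in> X. k \<le> length x}. INF y \<in> Y. ereal (d x y))"
    unfolding decseq_def by (auto intro!: SUP_subset_mono)
  then show ?thesis
    unfolding AH_dir_def by (rule limI[OF LIMSEQ_INF])
qed

lemma AH_dir_Un_finite_left:
  assumes "finite F"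
  shows "AH_dir d (X \<union> F) Y = AH_dir d X Y"
proof -
  obtain N where N: "\<forall>f\<in>F. length f \<le> N"
    using finite_imp_length_bounded[OF assms] by blast
  have "{x \<in> X \<union> F. k \<le> length x} = {x \<in> X. k \<le> length x}" if "N < k" for k
    using N that by fastforce
  then have eq: "\<forall>\<^sub>F k in sequentially.
      (SUP x \<in> {x \<in> X \<union> F. k \<le> length x}. INF y \<in> Y. ereal (d x y))
    = (SUP x \<in> {x \<in> X. k \<le> length x}. INF y \<in> Y. ereal (d x y))"
    by (auto intro: eventually_sequentiallyI[of "Suc N"])
  show ?thesis
    unfolding AH_dir_def lim_def using tendsto_cong[OF eq] by simp
qed

definition escapes_to :: "('a list \<Rightarrow> 'a list \<Rightarrow> real) \<Rightarrow> 'a list set \<Rightarrow> ereal \<Rightarrow> bool" where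
  "escapes_to d F M \<longleftrightarrow> (\<forall>r. ereal r < M \<longrightarrow> (\<exists>K. \<forall>y f. K \<le> length y \<longrightarrow> f \<in> F \<longrightarrow> r < d y f))"

lemma AH_dir_Un_right:
  assumes "X \<noteq> {}" and le_M: "\<And>x y. ereal (d x y) \<le> M" and "escapes_to d F M"
  shows "AH_dir d Y (X \<union> F) = AH_dir d Y X"
proof -
  define a where "a y = (INF x \<in> X. ereal (d y x))" for y
  define s t where
    "s k = (SUP y \<in> {y \<in> Y. k \<le> length y}. a y)" and
    "t k = (SUP y \<in> {y \<in> Y. k \<le> length y}. INF x \<in> X \<union> F. ereal (d y x))" for k
  have a_le_M: "a y \<le> M" for y
    using \<open>X \<noteq> {}\<close> le_M unfolding a_def by (meson INF_lower2 ex_in_conv)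
  have "t k \<le> s k" for k
    unfolding s_def t_def a_def by (intro SUP_mono') (auto intro!: INF_superset_mono)
  moreover have "(INF k. s k) \<le> t k" for k
  proof (rule dense_le)
    fix z assume "z < (INF k. s k)"
    then obtain r where "z < ereal r" and r: "ereal r < (INF k. s k)"
      using ereal_dense2 by blast
    have r_less_s: "ereal r < s k" for k
      using r INF_lower[of k UNIV s] by auto
    then obtain y0 where "ereal r < a y0"
      unfolding s_def by (auto simp: less_SUP_iff)
    then have "ereal r < M"
      using a_le_M[of y0] by simp
    then obtain K where K: "\<And>y f. K \<le> length y \<Longrightarrow> f \<in> F \<Longrightarrow> r < d y f"
      using \<open>escapes_to d F M\<close> unfolding escapes_to_def by blast
    obtain y where y: "y \<in> Y" "max k K \<le> length y" "ereal r < a y"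
      using r_less_s[of "max k K"] unfolding s_def by (auto simp: less_SUP_iff)
    have "ereal r \<le> (INF f \<in> F. ereal (d y f))"
    proof (rule INF_greatest)
      fix f assume "f \<in> F"
      then show "ereal r \<le> ereal (d y f)"
        using K[of y f] y(2) by simp
    qed
    then have "ereal r \<le> (INF x \<in> X \<union> F. ereal (d y x))"
      using y(3) by (simp add: INF_union a_def)
    also have "\<dots> \<le> t k"
      unfolding t_def using y by (auto intro!: SUP_upper)
    finally show "z \<le> t k"
      using \<open>z < ereal r\<close> by simp
  qed
  ultimately have "(INF k. t k) = (INF k. s k)"
    by (intro antisym INF_mono INF_greatest) auto
  then show ?thesis
    unfolding AH_dir_eq_INF[of d Y] s_def t_def a_def by simp
qed

lemma AH_Un_finite:
  assumes "finite F" "X \<noteq> {}" "\<And>x y. ereal (d x y) \<le> M" "escapes_to d F M"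
  shows "AH d (X \<union> F) Y = AH d X Y"
  unfolding AH_def using AH_dir_Un_finite_left[OF assms(1)] AH_dir_Un_right[OF assms(2-4)] by simp

lemma escapes_to_1:
  assumes "finite F"
    and lower: "\<And>y f. y \<noteq> [] \<Longrightarrow> 1 - real (length f) / real (length y) \<le> d y f"
  shows "escapes_to d F 1"
  unfolding escapes_to_def
proof (intro allI impI)
  fix r assume "ereal r < 1"
  then have "r < 1" by simp
  obtain N where N: "\<forall>f\<in>F. length f \<le> N"
    using finite_imp_length_bounded[OF assms(1)] by blast
  obtain K :: nat where "real N / (1 - r) < K"
    using reals_Archimedean2 by blast
  moreover have "0 \<le> real N / (1 - r)"
    using \<open>r < 1\<close> by simp
  ultimately have "K > 0"
    by linarith
  then have "real N / real K < 1 - r"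
    using \<open>real N / (1 - r) < K\<close> \<open>r < 1\<close> by (simp add: field_simps)
  have "r < d y f" if "K \<le> length y" "f \<in> F" for y f
  proof -
    have "real (length f) / real (length y) \<le> real N / real K"
      using N that \<open>K > 0\<close> by (intro frac_le) auto
    moreover have "y \<noteq> []"
      using that(1) \<open>K > 0\<close> by auto
    ultimately show ?thesis
      using lower[of y f] \<open>real N / real K < 1 - r\<close> by linarith
  qed
  then show "\<exists>K. \<forall>y f. K \<le> length y \<longrightarrow> f \<in> F \<longrightarrow> r < d y f"
    by blast
qed

lemma ced_escapes_to_infinity:
  assumes "finite F"
  shows "escapes_to ced F \<infinity>"
  unfolding escapes_to_def
proof (intro allI impI)
  fix r :: real
  obtain N where N: "\<forall>f\<in>F. length f \<le> N"
    using finite_imp_length_bounded[OF assms(1)] by blast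
  have "\<forall>\<^sub>F n in sequentially. r + harm N < (harm n :: real)"
    using harm_at_top by (simp add: filterlim_at_top_dense)
  then obtain K where K: "\<And>n. K \<le> n \<Longrightarrow> r + harm N < (harm n :: real)"
    unfolding eventually_sequentially by blast
  have "r < ced y f" if "K \<le> length y" "f \<in> F" for y f
  proof -
    have "harm (length f) \<le> (harm N :: real)"
      using N that by (intro harm_mono) auto
    then show ?thesis
      using harm_diff_le_ced[of y f] K[OF that(1)] by linarith
  qed
  then show "\<exists>K. \<forall>y f. K \<le> length y \<longrightarrow> f \<in> F \<longrightarrow> r < ced y f"
    by blast
qed

theorem mainTheorem7:
  fixes X Y F :: "('a::finite) list set"
  assumes "infinite X" and "infinite Y" and "finite F"
  shows "AH ned X Y = AH ned (X \<union> F) Y \<and>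
         AH ged X Y = AH ged (X \<union> F) Y \<and>
         AH ced X Y = AH ced (X \<union> F) Y"
proof -
  have "X \<noteq> {}"
    using \<open>infinite X\<close> by auto
  have "AH ned (X \<union> F) Y = AH ned X Y"
    using \<open>finite F\<close> \<open>X \<noteq> {}\<close> ned_le_1
    by (intro AH_Un_finite[where M = 1] escapes_to_1 ned_ge_1_minus_length_ratio) auto
  moreover have "AH ged (X \<union> F) Y = AH ged X Y"
    using \<open>finite F\<close> \<open>X \<noteq> {}\<close> ged_le_1
    by (intro AH_Un_finite[where M = 1] escapes_to_1 ged_ge_1_minus_length_ratio) auto
  moreover have "AH ced (X \<union> F) Y = AH ced X Y"
    using \<open>finite F\<close> \<open>X \<noteq> {}\<close>
    by (intro AH_Un_finite[where M = \<infinity>] ced_escapes_to_infinity) auto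
  ultimately show ?thesis
    by simp
qed

end
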